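(* Let $d\ge 2$ be an even integer, $p\ge 0$ an integer, and $M\ge 1$ an integer with $2M+1\ge d+p+1$. Let $\gamma:[0,\pi]\to[0,\infty)$ be an integrable weighting function that is positive on a subset of $[0,\pi]$ of positive measure. For $\mathbf a=(a_{-M},\dots,a_M)\in\mathbb R^{2M+1}$ define the spectral error $$e(\eta)=\sum_{m=-M}^{M}a_m e^{jm\eta}-(j\eta)^d,\qquad \eta\in[0,\pi],\ j=\sqrt{-1}.$$ Let $\mathbf a^\ast$ be a minimizer of $$\int_0^\pi \gamma(\eta)\,|e(\eta)|^2\,d\eta$$ over all $\mathbf a\in\mathbb R^{2M+1}$ satisfying the order-of-accuracy constraints $$\sum_{m=-M}^{M} m^q a_m=\begin{cases}0,& q\neq d,\\ d!,& q=d,\end{cases}\qquad q=0,1,\dots,d+p .$$ Then the spectral error of $\mathbf a^\ast$ satisfies $\operatorname{Im}[e(\eta)]=0$ for all $\eta\in[0,\pi]$ (equivalently $\sum_m a^\ast_m\sin(m\eta)\equiv 0$).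
   Context: This concerns explicit finite difference approximations $f^{(d)}(x_i)\approx (\Delta x)^{-d}\sum_{m=-M}^{M}a_m f(x_i+m\Delta x)$ of the $d$-th derivative on a uniform grid with spacing $\Delta x$; $\eta=k\Delta x$ is the normalized wavenumber. The constraints express that the approximation has truncation error of order $p+1$. Here $0^0=1$. *)

theory Defs
  imports "HOL-Analysis.Analysis"
begin

text \<open>Coefficients a_{-M},...,a_M are represented as a function int => real;
  only the values on {-M..M} matter.\<close>

definition spectral_error :: "nat \<Rightarrow> nat \<Rightarrow> (int \<Rightarrow> real) \<Rightarrow> real \<Rightarrow> complex" where
  "spectral_error M d a \<eta> =
     (\<Sum>m\<in>{-int M..int M}. complex_of_real (a m) * exp (\<i> * of_int m * complex_of_real \<eta>))
     - (\<i> * complex_of_real \<eta>) ^ d"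

definition order_constraints :: "nat \<Rightarrow> nat \<Rightarrow> nat \<Rightarrow> (int \<Rightarrow> real) \<Rightarrow> bool" where
  "order_constraints M d p a \<longleftrightarrow>
     (\<forall>q\<in>{0..d+p}. (\<Sum>m\<in>{-int M..int M}. real_of_int m ^ q * a m) = (if q = d then fact d else 0))"

definition weighted_cost :: "nat \<Rightarrow> nat \<Rightarrow> (real \<Rightarrow> real) \<Rightarrow> (int \<Rightarrow> real) \<Rightarrow> real" where
  "weighted_cost M d \<gamma> a = (LINT \<eta>:{0..pi}|lborel. \<gamma> \<eta> * (cmod (spectral_error M d a \<eta>))^2)"

end

theory Submission imports Defs "HOL-Complex_Analysis.Complex_Analysis" begin

(* Replacing the coefficients by their even part a(m) + a(-m) over 2 keeps the
   order-of-accuracy constraints (d is even, so the odd moments vanish on both sides),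
   kills the sine part Im e of the spectral error and leaves the cosine part Re e
   unchanged.  Since |e|^2 = (Re e)^2 + (Im e)^2, minimality of the cost forces the
   weighted integral of (Im e)^2 to vanish, so the sine polynomial Im e vanishes at
   infinitely many points of [0, pi]; being the restriction of an entire function, it
   vanishes identically. *)

lemma sum_int_symmetric_interval_reflect:
  fixes f :: "int \<Rightarrow> 'a::comm_monoid_add"
  shows "(\<Sum>m\<in>{-k..k}. f m) = (\<Sum>m\<in>{-k..k}. f (-m))"
  by (rule sum.reindex_bij_witness[of _ uminus uminus]) auto

definition even_part :: "(int \<Rightarrow> real) \<Rightarrow> int \<Rightarrow> real" where
  "even_part a m = (a m + a (-m)) / 2"

lemma sum_even_part_mult_odd:
  assumes "\<And>m. g (-m) = - g m"
  shows "(\<Sum>m\<in>{-k..k}. even_part a m * g m) = 0"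
proof -
  have "(\<Sum>m\<in>{-k..k}. even_part a m * g m) = (\<Sum>m\<in>{-k..k}. even_part a (-m) * g (-m))"
    by (rule sum_int_symmetric_interval_reflect)
  also have "\<dots> = - (\<Sum>m\<in>{-k..k}. even_part a m * g m)"
    by (simp add: even_part_def assms add.commute sum_negf)
  finally show ?thesis by simp
qed

lemma sum_even_part_mult_even:
  assumes "\<And>m. g (-m) = g m"
  shows "(\<Sum>m\<in>{-k..k}. even_part a m * g m) = (\<Sum>m\<in>{-k..k}. a m * g m)"
proof -
  have "(\<Sum>m\<in>{-k..k}. a (-m) * g m) = (\<Sum>m\<in>{-k..k}. a m * g m)"
    by (subst sum_int_symmetric_interval_reflect) (simp add: assms)
  then show ?thesis
    by (simp add: even_part_def add_divide_distrib distrib_right sum.distrib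
        flip: sum_divide_distrib)
qed

lemma order_constraints_even_part:
  assumes "even d" and "order_constraints M d p a"
  shows "order_constraints M d p (even_part a)"
  unfolding order_constraints_def
proof
  fix q assume q: "q \<in> {0..d+p}"
  show "(\<Sum>m\<in>{-int M..int M}. real_of_int m ^ q * even_part a m) = (if q = d then fact d else 0)"
  proof (cases "even q")
    case True
    then have "(\<Sum>m\<in>{-int M..int M}. even_part a m * real_of_int m ^ q)
        = (\<Sum>m\<in>{-int M..int M}. a m * real_of_int m ^ q)"
      by (intro sum_even_part_mult_even) simp
    then show ?thesis
      using assms(2) q by (simp add: order_constraints_def mult.commute)
  next
    case False
    then have "(\<Sum>m\<in>{-int M..int M}. even_part a m * real_of_int m ^ q) = 0"
      by (intro sum_even_part_mult_odd) simp
    then show ?thesis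
      using False \<open>even d\<close> by (auto simp: mult.commute)
  qed
qed

lemma imaginary_unit_mult_power_even:
  assumes "even d"
  shows "(\<i> * complex_of_real x) ^ d = complex_of_real ((-1) ^ (d div 2) * x ^ d)"
proof -
  obtain k where d: "d = 2 * k" using assms by blast
  have "(\<i> * complex_of_real x) ^ d = ((\<i> * complex_of_real x) ^ 2) ^ k"
    by (simp only: d power_mult)
  also have "\<dots> = (- 1) ^ k * (complex_of_real x ^ 2) ^ k"
    by (simp add: power_mult_distrib flip: power_minus)
  finally show ?thesis
    by (simp add: d power_mult)
qed

lemma spectral_error_eq_cis_sum:
  "spectral_error M d a x =
     (\<Sum>m\<in>{-int M..int M}. complex_of_real (a m) * cis (of_int m * x)) - (\<i> * complex_of_real x) ^ d"
  by (simp add: spectral_error_def cis_conv_exp mult.assoc)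

lemma Im_spectral_error:
  assumes "even d"
  shows "Im (spectral_error M d a x) = (\<Sum>m\<in>{-int M..int M}. a m * sin (of_int m * x))"
  by (simp add: spectral_error_eq_cis_sum imaginary_unit_mult_power_even[OF assms] Im_sum)

lemma Re_spectral_error:
  assumes "even d"
  shows "Re (spectral_error M d a x) =
    (\<Sum>m\<in>{-int M..int M}. a m * cos (of_int m * x)) - (-1) ^ (d div 2) * x ^ d"
  by (simp add: spectral_error_eq_cis_sum imaginary_unit_mult_power_even[OF assms] Re_sum)

lemma Im_spectral_error_even_part:
  assumes "even d"
  shows "Im (spectral_error M d (even_part a) x) = 0"
  unfolding Im_spectral_error[OF assms] by (rule sum_even_part_mult_odd) simp

lemma Re_spectral_error_even_part:
  assumes "even d"
  shows "Re (spectral_error M d (even_part a) x) = Re (spectral_error M d a x)"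
  unfolding Re_spectral_error[OF assms] by (subst sum_even_part_mult_even) simp_all

lemma continuous_on_spectral_error: "continuous_on S (spectral_error M d a)"
  unfolding spectral_error_def [abs_def] by (intro continuous_intros)

lemma set_integrable_mult_continuous:
  fixes \<gamma> h :: "real \<Rightarrow> real"
  assumes "set_integrable lborel S \<gamma>" and "compact S" and "continuous_on S h"
  shows "set_integrable lborel S (\<lambda>x. \<gamma> x * h x)"
proof -
  obtain B where B: "\<And>x. x \<in> S \<Longrightarrow> \<bar>h x\<bar> \<le> B"
    using compact_imp_bounded[OF compact_continuous_image[OF assms(3,2)]]
    by (auto simp: bounded_iff)
  have "set_borel_measurable lborel S \<gamma>"
    using assms(1) by (simp add: set_integrable_def set_borel_measurable_def)
  moreover have "set_borel_measurable lborel S h"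
    using set_measurable_continuous_on[OF borel_closed[OF compact_imp_closed] assms(3)] assms(2)
    by (simp add: set_borel_measurable_def)
  ultimately have "(\<lambda>x. (indicator S x *\<^sub>R \<gamma> x) * (indicator S x *\<^sub>R h x)) \<in> borel_measurable lborel"
    unfolding set_borel_measurable_def by measurable
  moreover have "(\<lambda>x. (indicator S x *\<^sub>R \<gamma> x) * (indicator S x *\<^sub>R h x))
      = (\<lambda>x. indicator S x *\<^sub>R (\<gamma> x * h x))"
    by (auto simp: indicator_def)
  ultimately have "set_borel_measurable lborel S (\<lambda>x. \<gamma> x * h x)"
    unfolding set_borel_measurable_def by simp
  moreover have "set_integrable lborel S (\<lambda>x. B * \<gamma> x)"
    using assms(1) by simp
  moreover have "AE x in lborel. x \<in> S \<longrightarrow> norm (\<gamma> x * h x) \<le> norm (B * \<gamma> x)"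
  proof (intro AE_I2 impI)
    fix x assume "x \<in> S"
    then have "\<bar>\<gamma> x\<bar> * \<bar>h x\<bar> \<le> \<bar>\<gamma> x\<bar> * \<bar>B\<bar>"
      using B by (intro mult_left_mono) force+
    then show "norm (\<gamma> x * h x) \<le> norm (B * \<gamma> x)"
      by (simp add: abs_mult mult.commute)
  qed
  ultimately show ?thesis
    by (metis set_integrable_bound)
qed

lemma weighted_cost_eq_even_part_plus_Im:
  assumes "even d" and "set_integrable lborel {0..pi} \<gamma>"
  shows "weighted_cost M d \<gamma> a = weighted_cost M d \<gamma> (even_part a)
           + (LINT x:{0..pi}|lborel. \<gamma> x * Im (spectral_error M d a x) ^ 2)"
proof -
  let ?e = "spectral_error M d a"
  have "set_integrable lborel {0..pi} (\<lambda>x. \<gamma> x * Re (?e x) ^ 2)"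
       "set_integrable lborel {0..pi} (\<lambda>x. \<gamma> x * Im (?e x) ^ 2)"
    by (intro set_integrable_mult_continuous assms(2) compact_Icc continuous_intros
        continuous_on_spectral_error)+
  then have "weighted_cost M d \<gamma> a = (LINT x:{0..pi}|lborel. \<gamma> x * Re (?e x) ^ 2)
           + (LINT x:{0..pi}|lborel. \<gamma> x * Im (?e x) ^ 2)"
    unfolding weighted_cost_def cmod_power2 distrib_left by (rule set_integral_add)
  moreover have "weighted_cost M d \<gamma> (even_part a) = (LINT x:{0..pi}|lborel. \<gamma> x * Re (?e x) ^ 2)"
    by (simp add: weighted_cost_def cmod_power2 Im_spectral_error_even_part[OF assms(1)]
        Re_spectral_error_even_part[OF assms(1)])
  ultimately show ?thesis by simp
qed

lemma infinite_zeros_if_weighted_integral_nonpos: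
  fixes \<gamma> h :: "real \<Rightarrow> real"
  assumes "set_integrable lborel S (\<lambda>x. \<gamma> x * h x)"
    and "\<And>x. x \<in> S \<Longrightarrow> \<gamma> x \<ge> 0" and "\<And>x. x \<in> S \<Longrightarrow> h x \<ge> 0"
    and "(LINT x:S|lborel. \<gamma> x * h x) \<le> 0"
    and "emeasure lborel {x\<in>S. \<gamma> x > 0} > 0"
  shows "infinite {x\<in>S. h x = 0}"
proof
  assume "finite {x\<in>S. h x = 0}"
  define P where "P = {x\<in>S. \<gamma> x > 0}"
  define f where "f = (\<lambda>x. indicator S x *\<^sub>R (\<gamma> x * h x))"
  have f_nonneg: "AE x in lborel. 0 \<le> f x"
    using assms(2,3) by (intro AE_I2) (simp add: f_def indicator_def)
  then have "integral\<^sup>L lborel f = 0"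
    using assms(4) integral_nonneg_AE[OF f_nonneg]
    by (simp add: f_def set_lebesgue_integral_def)
  then have "AE x in lborel. f x = 0"
    using integral_nonneg_eq_0_iff_AE[OF _ f_nonneg] assms(1) by (simp add: f_def set_integrable_def)
  moreover have "AE x in lborel. x \<notin> {x\<in>S. h x = 0}"
    using \<open>finite {x\<in>S. h x = 0}\<close> by (intro AE_not_in finite_imp_null_set_lborel)
  ultimately have "AE x in lborel. x \<notin> P"
    by eventually_elim (auto simp: P_def f_def)
  moreover have "P \<in> sets lborel"
    using assms(5) emeasure_notin_sets unfolding P_def by fastforce
  ultimately have "emeasure lborel P = 0"
    by (simp flip: AE_iff_null_sets add: null_setsD1)
  then show False
    using assms(5) by (simp add: P_def)
qed

lemma sin_sum_eq_0_if_infinite_zeros: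
  fixes c :: "int \<Rightarrow> real"
  assumes "infinite {x\<in>{a..b}. (\<Sum>m\<in>A. c m * sin (of_int m * x)) = 0}"
  shows "(\<Sum>m\<in>A. c m * sin (of_int m * x)) = 0"
proof -
  define s where "s = (\<lambda>y. \<Sum>m\<in>A. c m * sin (of_int m * y))"
  define g where "g = (\<lambda>z. \<Sum>m\<in>A. complex_of_real (c m) * sin (of_int m * z))"
  define Z where "Z = complex_of_real ` {y\<in>{a..b}. s y = 0}"
  have g_of_real: "g (complex_of_real y) = complex_of_real (s y)" for y
    unfolding g_def s_def of_real_sum by (intro sum.cong refl) (simp flip: sin_of_real)
  have "infinite Z"
    using assms finite_imageD[of complex_of_real] unfolding Z_def s_def by (auto simp: inj_on_def)
  moreover have "compact (complex_of_real ` {a..b})"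
    by (intro compact_continuous_image continuous_intros compact_Icc)
  moreover have "Z \<subseteq> complex_of_real ` {a..b}"
    unfolding Z_def by auto
  ultimately obtain \<xi> where limpt: "\<xi> islimpt Z"
    using compact_eq_Bolzano_Weierstrass[THEN iffD1] by blast
  have holo: "g holomorphic_on UNIV"
    unfolding g_def by (intro holomorphic_intros)
  have zeros: "g z = 0" if "z \<in> Z" for z
    using that unfolding Z_def by (auto simp: g_of_real)
  have "g (complex_of_real x) = 0"
    by (rule analytic_continuation[OF holo open_UNIV connected_UNIV subset_UNIV UNIV_I limpt zeros UNIV_I])
  then have "s x = 0"
    by (simp add: g_of_real)
  then show ?thesis
    by (simp add: s_def)
qed

theorem lemma1:
  fixes d p M :: nat and \<gamma> :: "real \<Rightarrow> real" and astar :: "int \<Rightarrow> real"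
  assumes "even d" and "d \<ge> 2" and "M \<ge> 1" and "2 * M + 1 \<ge> d + p + 1"
    and "set_integrable lborel {0..pi} \<gamma>"
    and "\<forall>\<eta>\<in>{0..pi}. \<gamma> \<eta> \<ge> 0"
    and "emeasure lborel {\<eta>\<in>{0..pi}. \<gamma> \<eta> > 0} > 0"
    and "order_constraints M d p astar"
    and "\<forall>a. order_constraints M d p a \<longrightarrow> weighted_cost M d \<gamma> astar \<le> weighted_cost M d \<gamma> a"
  shows "\<forall>\<eta>\<in>{0..pi}. Im (spectral_error M d astar \<eta>) = 0"
proof -
  (* The size conditions on d, M and p only make the constraints satisfiable;
     the argument does not use them. *)
  let ?S = "\<lambda>x. \<Sum>m\<in>{-int M..int M}. astar m * sin (of_int m * x)"
  have "weighted_cost M d \<gamma> astar \<le> weighted_cost M d \<gamma> (even_part astar)"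
    using assms(9) order_constraints_even_part[OF assms(1,8)] by blast
  then have "(LINT x:{0..pi}|lborel. \<gamma> x * ?S x ^ 2) \<le> 0"
    using weighted_cost_eq_even_part_plus_Im[OF assms(1,5), of M astar]
    by (simp add: Im_spectral_error[OF assms(1)])
  moreover have "set_integrable lborel {0..pi} (\<lambda>x. \<gamma> x * ?S x ^ 2)"
    by (intro set_integrable_mult_continuous assms(5) compact_Icc continuous_intros)
  ultimately have "infinite {x\<in>{0..pi}. ?S x ^ 2 = 0}"
    using assms(6,7) by (intro infinite_zeros_if_weighted_integral_nonpos) auto
  then have "?S x = 0" for x
    by (intro sin_sum_eq_0_if_infinite_zeros) auto
  then show ?thesis
    by (simp add: Im_spectral_error[OF assms(1)])
qed

end
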